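(* Let $A,B\in\mathfrak{su}(2)$ satisfy $\operatorname{tr}(AB)=0$, and put $g:=\exp(A)$ and $h:=\exp(B)$. Then \[ gh=hg+h^{-1}g+hg^{-1}-\operatorname{tr}(hg)\,, \] where the scalar $\operatorname{tr}(hg)$ is understood as $\operatorname{tr}(hg)$ times the $2\times 2$ identity matrix.
   Context: $\mathfrak{su}(2)$ denotes the Lie algebra of traceless anti-Hermitian $2\times 2$ complex matrices, $\exp$ is the matrix exponential, and $\operatorname{tr}$ is the ordinary matrix trace. *)

theory Defs
  imports "HOL-Analysis.Analysis"
begin

primrec mpow :: "complex^2^2 \<Rightarrow> nat \<Rightarrow> complex^2^2" where
  "mpow A 0 = mat 1"
| "mpow A (Suc n) = A ** mpow A n"

definition mexp :: "complex^2^2 \<Rightarrow> complex^2^2" where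
  "mexp A = (\<Sum>n. (1 / fact n) *\<^sub>R mpow A n)"

definition adjoint_mat :: "complex^2^2 \<Rightarrow> complex^2^2" where
  "adjoint_mat A = (\<chi> i j. cnj (A $ j $ i))"

definition su2 :: "(complex^2^2) set" where
  "su2 = {A. adjoint_mat A = - A \<and> trace A = 0}"

end

theory Submission
  imports Defs
begin

(* For traceless A, Cayley-Hamilton gives A^2 = -det A, so with mu^2 = det A the exponential
   series collapses to exp A = cos mu + (sin mu / mu) A; hence det (exp A) = 1, and
   tr (AB) = 0 gives tr g tr h = 2 tr (gh) for g = exp A, h = exp B.  In SL(2) the inverse
   is the adjugate g^-1 = tr g - g, so with the polarised Cayley-Hamilton identity
   gh + hg = tr g h + tr h g - (tr g tr h - tr (gh)) the claim reduces to exactly this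
   trace relation.  Only the tracelessness of elements of su(2) is used. *)

lemma mat_nth [simp]: "mat c $ i $ j = (if i = j then c else 0)"
  unfolding mat_def by simp

lemma mat_matrix_mult_nth [simp]: "(mat c ** A) $ i $ j = c * A $ i $ j"
  for A :: "'a::semiring_1^'n^'m"
  by (simp add: matrix_matrix_mult_def if_distrib if_distribR cong: if_cong)

lemma matrix_mult_mat_nth [simp]: "(A ** mat c) $ i $ j = A $ i $ j * c"
  for A :: "'a::semiring_1^'n^'m"
  by (simp add: matrix_matrix_mult_def if_distrib if_distribR cong: if_cong)

lemma matrix_mult_mat_commute: "A ** mat c = mat c ** A"
  for A :: "'a::comm_semiring_1^'n^'n"
  by (simp add: vec_eq_iff mult.commute)

lemma mat_mult_mat: "mat a ** mat b = (mat (a * b) :: 'a::semiring_1^'n^'n)"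
  by (simp add: vec_eq_iff)

lemma matrix_inv_eqI:
  fixes A B :: "'a::field^'n^'n"
  assumes "A ** B = mat 1"
  shows "matrix_inv A = B"
proof -
  have "\<exists>X. A ** X = mat 1 \<and> X ** A = mat 1"
    using assms matrix_left_right_inverse by blast
  then have left_inverse: "matrix_inv A ** A = mat 1"
    unfolding matrix_inv_def by (rule someI2_ex[where Q = "\<lambda>X. X ** A = mat 1"]) blast
  have "matrix_inv A = matrix_inv A ** (A ** B)"
    by (simp add: assms)
  also have "\<dots> = B"
    by (simp add: matrix_mul_assoc left_inverse)
  finally show ?thesis .
qed

lemma matrix_mult_nth_2: "(X ** Y) $ i $ j = X$i$1 * Y$1$j + X$i$2 * Y$2$j"
  for X Y :: "'a::semiring_1^2^2"
  by (simp add: matrix_matrix_mult_def sum_2)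

lemma trace_2: "trace (A :: 'a::semiring_1^2^2) = A$1$1 + A$2$2"
  by (simp add: trace_def sum_2)

lemma matrix_inv_det_1_2:
  fixes g :: "'a::field^2^2"
  assumes "det g = 1"
  shows "matrix_inv g = mat (trace g) - g"
proof (rule matrix_inv_eqI)
  show "g ** (mat (trace g) - g) = mat 1"
    using assms by (simp add: vec_eq_iff forall_2 matrix_mult_nth_2 trace_2 det_2) algebra
qed

lemma det_1_mult_identity_2:
  fixes g h :: "'a::field^2^2"
  assumes "det g = 1" and "det h = 1" and "2 * trace (g ** h) = trace g * trace h"
  shows "g ** h = h ** g + matrix_inv h ** g + h ** matrix_inv g - mat (trace (h ** g))"
  using assms(3)
  unfolding matrix_inv_det_1_2[OF assms(1)] matrix_inv_det_1_2[OF assms(2)]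
  by (simp add: vec_eq_iff forall_2 matrix_mult_nth_2 trace_2) algebra

lemma traceless_nth_2:
  fixes A :: "'a::comm_ring_1^2^2"
  assumes "trace A = 0"
  shows "A$2$2 = - A$1$1"
  using assms by (simp add: trace_2 add_eq_0_iff2)

lemma traceless_square_2:
  fixes A :: "'a::comm_ring_1^2^2"
  assumes "trace A = 0"
  shows "A ** A = mat (- det A)"
  using traceless_nth_2[OF assms]
  by (simp add: vec_eq_iff forall_2 matrix_mult_nth_2 det_2 algebra_simps)

lemma det_pencil_2:
  fixes A :: "'a::comm_ring_1^2^2"
  assumes "trace A = 0"
  shows "det (mat c + mat s ** A) = c\<^sup>2 + s\<^sup>2 * det A"
  using traceless_nth_2[OF assms]
  by (simp add: det_2 algebra_simps power2_eq_square)

lemma trace_pencil_2: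
  fixes A :: "'a::comm_ring_1^2^2"
  assumes "trace A = 0"
  shows "trace (mat c + mat s ** A) = 2 * c"
  using assms by (simp add: trace_2 algebra_simps mult_2 flip: distrib_left)

lemma trace_pencil_mult_2:
  fixes A B :: "'a::comm_ring_1^2^2"
  assumes "trace A = 0" and "trace B = 0"
  shows "trace ((mat c + mat s ** A) ** (mat d + mat t ** B)) = 2 * c * d + s * t * trace (A ** B)"
  using traceless_nth_2[OF assms(1)] traceless_nth_2[OF assms(2)]
  by (simp add: trace_2 matrix_mult_nth_2 algebra_simps)

lemma matrix_mult_pencil:
  fixes A :: "'a::comm_ring_1^'n^'n"
  assumes "A ** A = mat (- m)"
  shows "A ** (mat p + mat q ** A) = mat (- q * m) + mat p ** A"
proof -
  have "A ** (mat p + mat q ** A) = A ** mat p + A ** (mat q ** A)"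
    by (rule matrix_add_ldistrib)
  also have "\<dots> = mat p ** A + mat q ** (A ** A)"
    by (simp add: matrix_mult_mat_commute matrix_mul_assoc)
  also have "\<dots> = mat (- q * m) + mat p ** A"
    by (simp add: assms mat_mult_mat add.commute)
  finally show ?thesis .
qed

lemma pencil_sums:
  fixes A :: "'a::real_normed_field^'n^'n"
  assumes "a sums a0" and "b sums b0"
  shows "(\<lambda>n. mat (a n) + mat (b n) ** A) sums (mat a0 + mat b0 ** A)"
proof -
  have "(\<lambda>N. (\<Sum>n<N. mat (a n) + mat (b n) ** A) $ i $ j) \<longlonglongrightarrow> (mat a0 + mat b0 ** A) $ i $ j"
    for i j
  proof -
    have "(\<lambda>n. (if i = j then a n else 0) + b n * A$i$j) sums ((if i = j then a0 else 0) + b0 * A$i$j)"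
      using assms by (intro sums_add sums_mult2) auto
    then show ?thesis
      by (simp add: sums_def)
  qed
  then show ?thesis
    unfolding sums_def by (intro vec_tendstoI) auto
qed

(* sin z / z, continued by 1 at z = 0 *)
definition sinc :: "complex \<Rightarrow> complex" where
  "sinc z = (\<Sum>n. sin_coeff (Suc n) *\<^sub>R z ^ n)"

lemma summable_sinc: "summable (\<lambda>n. sin_coeff (Suc n) *\<^sub>R z ^ n)" for z :: complex
proof (rule summable_comparison_test)
  show "summable (\<lambda>n. inverse (fact n) * norm z ^ n)"
    by (rule summable_exp)
  have "\<bar>sin_coeff (Suc n)\<bar> \<le> inverse (fact n)" for n
  proof -
    have "\<bar>sin_coeff (Suc n)\<bar> \<le> inverse (fact (Suc n))"
      by (simp add: sin_coeff_def abs_mult power_abs field_simps)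
    also have "\<dots> \<le> inverse (fact n)"
      by (intro le_imp_inverse_le fact_mono) auto
    finally show ?thesis .
  qed
  then show "\<exists>N. \<forall>n\<ge>N. norm (sin_coeff (Suc n) *\<^sub>R z ^ n) \<le> inverse (fact n) * norm z ^ n"
    by (simp add: norm_power mult_right_mono)
qed

lemma sin_eq_mult_sinc: "sin z = z * sinc z"
proof -
  have "(\<lambda>n. sin_coeff (Suc n) *\<^sub>R z ^ Suc n) sums sin z"
    using sin_converges[of z] sums_Suc_iff[of "\<lambda>n. sin_coeff n *\<^sub>R z ^ n"] by simp
  moreover have "(\<lambda>n. sin_coeff (Suc n) *\<^sub>R z ^ Suc n) sums (z * sinc z)"
    using sums_mult[OF summable_sums[OF summable_sinc], of z] by (simp add: sinc_def)
  ultimately show ?thesis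
    by (rule sums_unique2)
qed

lemma cos_squared_add_sinc_squared: "(cos z)\<^sup>2 + z\<^sup>2 * (sinc z)\<^sup>2 = 1"
  using sin_cos_squared_add[of z] by (simp add: sin_eq_mult_sinc power_mult_distrib add.commute)

lemma cos_coeff_Suc_mult_fact: "cos_coeff (Suc n) * fact (Suc n) = - (sin_coeff n * fact n)"
  by (simp add: cos_coeff_Suc del: fact_Suc) simp

lemma sin_coeff_Suc_mult_fact: "sin_coeff (Suc n) * fact (Suc n) = cos_coeff n * fact n"
  by (simp add: sin_coeff_Suc del: fact_Suc) simp

(* The exponent n - 1 only matters for n > 0, since sin_coeff 0 = 0. *)
lemma mpow_square_scalar:
  fixes A :: "complex^2^2"
  assumes "A ** A = mat (- mu\<^sup>2)"
  shows "mpow A n = mat (of_real (cos_coeff n * fact n) * mu ^ n)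
    + mat (of_real (sin_coeff n * fact n) * mu ^ (n - 1)) ** A"
proof (induction n)
  case 0
  then show ?case by (simp add: cos_coeff_def)
next
  case (Suc n)
  have "- (of_real (sin_coeff n * fact n) * mu ^ (n - 1)) * mu\<^sup>2
      = of_real (- (sin_coeff n * fact n)) * mu ^ Suc n"
    by (cases n) (simp_all add: power2_eq_square)
  then show ?case
    by (simp only: mpow.simps Suc.IH matrix_mult_pencil[OF assms]
        cos_coeff_Suc_mult_fact sin_coeff_Suc_mult_fact diff_Suc_1)
qed

lemma mexp_square_scalar:
  fixes A :: "complex^2^2"
  assumes "A ** A = mat (- mu\<^sup>2)"
  shows "mexp A = mat (cos mu) + mat (sinc mu) ** A"
proof -
  have terms: "(1 / fact n) *\<^sub>R mpow A n
      = mat (cos_coeff n *\<^sub>R mu ^ n) + mat (sin_coeff n *\<^sub>R mu ^ (n - 1)) ** A" for n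
    by (simp add: mpow_square_scalar[OF assms] vec_eq_iff) (simp add: scaleR_conv_of_real field_simps)
  have "(\<lambda>n. sin_coeff n *\<^sub>R mu ^ (n - 1)) sums sinc mu"
    using summable_sums[OF summable_sinc, of mu] sums_Suc_iff[of "\<lambda>n. sin_coeff n *\<^sub>R mu ^ (n - 1)"]
    by (simp add: sinc_def)
  with cos_converges have "(\<lambda>n. (1 / fact n) *\<^sub>R mpow A n) sums (mat (cos mu) + mat (sinc mu) ** A)"
    unfolding terms by (rule pencil_sums)
  then show ?thesis
    by (simp add: mexp_def sums_iff)
qed

lemma mexp_traceless_2:
  fixes A :: "complex^2^2"
  assumes "trace A = 0"
  obtains c s where "mexp A = mat c + mat s ** A" and "c\<^sup>2 + s\<^sup>2 * det A = 1"
proof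
  let ?mu = "csqrt (det A)"
  have "A ** A = mat (- ?mu\<^sup>2)"
    using traceless_square_2[OF assms] by simp
  then show "mexp A = mat (cos ?mu) + mat (sinc ?mu) ** A"
    by (rule mexp_square_scalar)
  show "(cos ?mu)\<^sup>2 + (sinc ?mu)\<^sup>2 * det A = 1"
    using cos_squared_add_sinc_squared[of ?mu] by (simp add: mult.commute)
qed

lemma det_mexp_traceless_2:
  fixes A :: "complex^2^2"
  assumes "trace A = 0"
  shows "det (mexp A) = 1"
proof -
  obtain c s where "mexp A = mat c + mat s ** A" and "c\<^sup>2 + s\<^sup>2 * det A = 1"
    using mexp_traceless_2[OF assms] .
  then show ?thesis
    by (simp add: det_pencil_2[OF assms])
qed

lemma trace_mexp_mult_traceless_2:
  fixes A B :: "complex^2^2"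
  assumes "trace A = 0" and "trace B = 0" and "trace (A ** B) = 0"
  shows "2 * trace (mexp A ** mexp B) = trace (mexp A) * trace (mexp B)"
proof -
  obtain c s where "mexp A = mat c + mat s ** A"
    using mexp_traceless_2[OF assms(1)] .
  moreover obtain d t where "mexp B = mat d + mat t ** B"
    using mexp_traceless_2[OF assms(2)] .
  ultimately show ?thesis
    using assms by (simp add: trace_pencil_2 trace_pencil_mult_2)
qed

theorem lemma1:
  fixes A B :: "complex^2^2"
  assumes "A \<in> su2" and "B \<in> su2" and "trace (A ** B) = 0"
  shows "mexp A ** mexp B
    = mexp B ** mexp A + matrix_inv (mexp B) ** mexp A + mexp B ** matrix_inv (mexp A)
      - mat (trace (mexp B ** mexp A))"
proof (rule det_1_mult_identity_2)
  have "trace A = 0" and "trace B = 0"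
    using assms(1,2) by (simp_all add: su2_def)
  then show "det (mexp A) = 1" and "det (mexp B) = 1"
    and "2 * trace (mexp A ** mexp B) = trace (mexp A) * trace (mexp B)"
    using assms(3) by (simp_all add: det_mexp_traceless_2 trace_mexp_mult_traceless_2)
qed

end
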